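(* Let $-\pi/2<\alpha<\pi/2$ and $\lambda<1$. For every $f\in\mathcal{S}^*_\alpha(\lambda)$, $\|J[f]\|\le 4(1-\lambda)\cos\alpha$, and this inequality is sharp: equality holds for some $f\in\mathcal{S}^*_\alpha(\lambda)$.
   Context: $\mathbb{D}$ is the open unit disk; $\mathcal{A}$ the class of analytic $f$ on $\mathbb{D}$ with $f(0)=0$, $f'(0)=1$. For $\alpha\in(-\pi/2,\pi/2)$, $\lambda<1$, $\mathcal{S}^*_\alpha(\lambda)=\{f\in\mathcal{A}: f(z)\neq0 \text{ for } z\ne 0,\ \mathrm{Re}\,(e^{i\alpha}zf'(z)/f(z))>\lambda\cos\alpha \text{ on }\mathbb{D}\}$. The Alexander transform is $J[f](z)=\int_0^z f(w)/w\,dw$. For $h\in\mathcal{A}$ with $h'$ nonvanishing on $\mathbb{D}$, the pre-Schwarzian norm is $\|h\|=\sup_{z\in\mathbb{D}}(1-|z|^2)|h''(z)/h'(z)|$. *)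

theory Defs
  imports "HOL-Complex_Analysis.Complex_Analysis" "HOL-Library.Extended_Real"
begin

definition classA :: "(complex \<Rightarrow> complex) set" where
  "classA = {f. f holomorphic_on ball 0 1 \<and> f 0 = 0 \<and> deriv f 0 = 1}"

text \<open>Spirallike class S*_alpha(lambda). The quotient z f'(z)/f(z) is only
  meaningful for z nonzero (its value at 0 is the limit 1); the condition is
  imposed on the punctured disk.\<close>
definition spirallike :: "real \<Rightarrow> real \<Rightarrow> (complex \<Rightarrow> complex) set" where
  "spirallike \<alpha> lam = {f \<in> classA.
      (\<forall>z \<in> ball 0 1. z \<noteq> 0 \<longrightarrow> f z \<noteq> 0) \<and>
      (\<forall>z \<in> ball 0 1. z \<noteq> 0 \<longrightarrow>
          Re (exp (\<i> * of_real \<alpha>) * z * deriv f z / f z) > lam * cos \<alpha>)}"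

text \<open>Alexander transform J[f](z) = integral from 0 to z of f(w)/w dw,
  along the segment (path independent on the disk); the integrand is
  understood with its removable singularity at 0 filled in by f'(0).\<close>
definition alexander :: "(complex \<Rightarrow> complex) \<Rightarrow> complex \<Rightarrow> complex" where
  "alexander f z = contour_integral (linepath 0 z)
       (\<lambda>w. if w = 0 then deriv f 0 else f w / w)"

definition preschwarzian_norm :: "(complex \<Rightarrow> complex) \<Rightarrow> ereal" where
  "preschwarzian_norm h =
     (SUP z \<in> ball 0 1. ereal ((1 - (cmod z)\<^sup>2) *
         cmod (deriv (deriv h) z / deriv h z)))"

end

theory Submission
  imports Defs
begin

text \<open>Write \<open>g(z) = f(z)/z\<close>, so that \<open>J[f]' = g\<close>, \<open>J[f]''/J[f]' = g'/g\<close> and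
  \<open>z f'/f = 1 + z g'/g\<close>. For \<open>f\<close> spirallike, \<open>Q = e\<^sup>i\<^sup>\<alpha> (1 + z g'/g) - \<lambda> cos \<alpha> - i sin \<alpha>\<close>
  has positive real part and \<open>Q(0) = c = (1 - \<lambda>) cos \<alpha>\<close>; the Schwarz lemma applied to
  \<open>(Q - c)/(Q + c)\<close> gives \<open>|z g'/g| \<le> 2c|z|/(1 - |z|)\<close>, hence
  \<open>(1 - |z|\<^sup>2) |g'/g| \<le> 2c (1 + |z|) \<le> 4c\<close>. For \<open>f(z) = z/(1 - z)\<^bsup>2b\<^esup>\<close> with
  \<open>b = e\<^sup>-\<^sup>i\<^sup>\<alpha> c\<close> one has \<open>g'/g = 2b/(1 - z)\<close>, and the bound is approached as
  \<open>z \<rightarrow> 1\<close> along the real axis.\<close>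

definition alexander_integrand :: "(complex \<Rightarrow> complex) \<Rightarrow> complex \<Rightarrow> complex" where
  "alexander_integrand f w = (if w = 0 then deriv f 0 else f w / w)"

lemma holomorphic_alexander_integrand:
  assumes "f holomorphic_on S" "open S" "f 0 = 0"
  shows "alexander_integrand f holomorphic_on S"
proof -
  have "alexander_integrand f = (\<lambda>w. if w = 0 then deriv f 0 else (f w - f 0) / (w - 0))"
    using assms(3) by (auto simp: alexander_integrand_def)
  then show ?thesis
    using pole_lemma_open[OF assms(1,2)] by simp
qed

lemma alexander_has_field_derivative:
  assumes holf: "f holomorphic_on S" and S: "open S" "convex S" "0 \<in> S"
    and f0: "f 0 = 0" and z: "z \<in> S"
  shows "(alexander f has_field_derivative alexander_integrand f z) (at z)"
proof -
  obtain g where g: "\<And>w. w \<in> S \<Longrightarrow> (g has_field_derivative alexander_integrand f w) (at w within S)"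
    using holomorphic_convex_primitive'[OF S(2,1) holomorphic_alexander_integrand[OF holf S(1) f0]]
    by blast
  have eq: "alexander f w = g w - g 0" if "w \<in> S" for w
  proof -
    have "closed_segment 0 w \<subseteq> S"
      using S that by (simp add: closed_segment_subset)
    then have "(alexander_integrand f has_contour_integral (g w - g 0)) (linepath 0 w)"
      using contour_integral_primitive[OF g, of "linepath 0 w"] by auto
    then show ?thesis
      unfolding alexander_def alexander_integrand_def[abs_def] by (rule contour_integral_unique)
  qed
  have "((\<lambda>w. g w - g 0) has_field_derivative alexander_integrand f z) (at z)"
    using g[OF z] at_within_open[OF z S(1)] by (auto intro!: derivative_eq_intros)
  then show ?thesis
    by (rule has_field_derivative_transform_within_open[OF _ S(1) z]) (simp add: eq)
qed

lemma deriv_alexander: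
  assumes "f holomorphic_on S" "open S" "convex S" "0 \<in> S" "f 0 = 0" "z \<in> S"
  shows "deriv (alexander f) z = alexander_integrand f z"
  using alexander_has_field_derivative[OF assms] by (rule DERIV_imp_deriv)

lemma deriv2_alexander:
  assumes "f holomorphic_on S" "open S" "convex S" "0 \<in> S" "f 0 = 0" "z \<in> S"
  shows "deriv (deriv (alexander f)) z = deriv (alexander_integrand f) z"
proof (rule deriv_cong_ev)
  have "\<forall>\<^sub>F w in nhds z. w \<in> S"
    using assms(2,6) by (rule eventually_nhds_in_open)
  then show "\<forall>\<^sub>F w in nhds z. deriv (alexander f) w = alexander_integrand f w"
    by eventually_elim (use assms(1-5) deriv_alexander in blast)
qed simp

lemma preschwarzian_norm_alexander:
  assumes "f holomorphic_on ball 0 1" "f 0 = 0"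
  shows "preschwarzian_norm (alexander f) =
    (SUP z \<in> ball 0 1. ereal ((1 - (cmod z)\<^sup>2) *
        cmod (deriv (alexander_integrand f) z / alexander_integrand f z)))"
  unfolding preschwarzian_norm_def
  using deriv_alexander[OF assms(1) _ _ _ assms(2)] deriv2_alexander[OF assms(1) _ _ _ assms(2)]
  by (intro SUP_cong) auto

lemma norm_diff_less_norm_add_of_Re_pos:
  fixes q :: complex and c :: real
  assumes "Re q > 0" "c > 0"
  shows "cmod (q - of_real c) < cmod (q + of_real c)"
proof -
  have "(Re q - c)\<^sup>2 + (Im q)\<^sup>2 < (Re q + c)\<^sup>2 + (Im q)\<^sup>2"
    using mult_pos_pos[OF assms] by (simp add: power2_eq_square algebra_simps)
  then have "(cmod (q - of_real c))\<^sup>2 < (cmod (q + of_real c))\<^sup>2"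
    by (simp add: cmod_power2)
  then show ?thesis
    by (simp add: power_less_imp_less_base)
qed

lemma caratheodory_norm_bound:
  assumes holQ: "Q holomorphic_on ball 0 1" and ReQ: "\<And>w. w \<in> ball 0 1 \<Longrightarrow> Re (Q w) > 0"
    and Q0: "Q 0 = of_real c" and z: "z \<in> ball 0 1"
  shows "cmod (Q z - of_real c) * (1 - cmod z) \<le> 2 * c * cmod z"
proof -
  have c: "c > 0"
    using ReQ[of 0] Q0 by simp
  have Qc: "Q w + of_real c \<noteq> 0" if "w \<in> ball 0 1" for w
  proof -
    have "Re (Q w + of_real c) > 0"
      using ReQ[OF that] c by simp
    then show ?thesis
      by (metis zero_complex.sel(1) less_irrefl)
  qed
  define W where "W w = (Q w - of_real c) / (Q w + of_real c)" for w
  have "W holomorphic_on ball 0 1"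
    unfolding W_def[abs_def] using holQ Qc by (auto intro!: holomorphic_intros)
  moreover have "W 0 = 0"
    by (simp add: W_def Q0)
  moreover have "cmod (W w) < 1" if "cmod w < 1" for w
    using norm_diff_less_norm_add_of_Re_pos[OF ReQ c] Qc that
    by (simp add: W_def norm_divide divide_less_eq)
  ultimately have W: "cmod (W z) \<le> cmod z"
    using Schwarz_Lemma(1) z by simp
  have Q_eq: "(Q z - of_real c) * (1 - W z) = 2 * of_real c * W z"
    using Qc[OF z] by (simp add: W_def field_simps)
  have "cmod (Q z - of_real c) * (1 - cmod z) \<le> cmod (Q z - of_real c) * cmod (1 - W z)"
    using W norm_triangle_ineq2[of 1 "W z"] by (intro mult_left_mono) auto
  also have "\<dots> = 2 * c * cmod (W z)"
    using arg_cong[OF Q_eq, of cmod] c by (simp add: norm_mult)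
  also have "\<dots> \<le> 2 * c * cmod z"
    using W c by simp
  finally show ?thesis .
qed

lemma isCont_le_at_center:
  fixes F :: "'a::{metric_space, perfect_space} \<Rightarrow> real"
  assumes "isCont F a" "r > 0" "\<And>w. w \<in> ball a r \<Longrightarrow> w \<noteq> a \<Longrightarrow> F w \<le> B"
  shows "F a \<le> B"
proof (rule tendsto_upperbound)
  show "(F \<longlongrightarrow> F a) (at a)"
    using assms(1) by (simp add: isCont_def)
  show "\<forall>\<^sub>F w in at a. F w \<le> B"
    unfolding eventually_at using assms(2,3) by (auto simp: dist_commute)
qed simp

lemma logderiv_alexander_integrand:
  fixes f :: "complex \<Rightarrow> complex"
  assumes holf: "f holomorphic_on S" and S: "open S" and f0: "f 0 = 0"
    and w: "w \<in> S" and fw: "f w \<noteq> 0"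
  defines "G \<equiv> alexander_integrand f"
  shows "w * deriv f w / f w = 1 + w * deriv G w / G w"
proof -
  have f_eq: "f = (\<lambda>w. w * G w)"
    using f0 by (auto simp: G_def alexander_integrand_def)
  have "(G has_field_derivative deriv G w) (at w)"
    using holomorphic_alexander_integrand[OF holf S f0] S w
    by (auto simp: G_def intro: holomorphic_derivI)
  then have "(f has_field_derivative G w + w * deriv G w) (at w)"
    unfolding f_eq by (auto intro!: derivative_eq_intros)
  then have "deriv f w = G w + w * deriv G w"
    by (rule DERIV_imp_deriv)
  moreover have "w \<noteq> 0" "G w \<noteq> 0"
    using fw f0 f_eq by auto
  ultimately show ?thesis
    by (subst (2) f_eq) (simp add: field_simps)
qed

lemma spirallike_alexander_integrand:
  assumes "f \<in> spirallike \<alpha> lam"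
  defines "G \<equiv> alexander_integrand f"
  shows "G holomorphic_on ball 0 1" and "\<And>w. w \<in> ball 0 1 \<Longrightarrow> G w \<noteq> 0"
    and "\<And>w. w \<in> ball 0 1 \<Longrightarrow> w \<noteq> 0 \<Longrightarrow> w * deriv f w / f w = 1 + w * deriv G w / G w"
proof -
  have holf: "f holomorphic_on ball 0 1" and f0: "f 0 = 0" and df0: "deriv f 0 = 1"
    and fnz: "\<And>w. w \<in> ball 0 1 \<Longrightarrow> w \<noteq> 0 \<Longrightarrow> f w \<noteq> 0"
    using assms unfolding spirallike_def classA_def by auto
  show "G holomorphic_on ball 0 1"
    unfolding G_def by (rule holomorphic_alexander_integrand[OF holf open_ball f0])
  have G0: "G 0 = 1"
    by (simp add: G_def alexander_integrand_def df0)
  show "G w \<noteq> 0" if "w \<in> ball 0 1" for w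
    using fnz[OF that] G0 by (cases "w = 0") (auto simp: G_def alexander_integrand_def)
  show "w * deriv f w / f w = 1 + w * deriv G w / G w" if "w \<in> ball 0 1" "w \<noteq> 0" for w
    unfolding G_def using logderiv_alexander_integrand[OF holf open_ball f0 that(1) fnz[OF that]] .
qed

lemma spirallike_Re_logderiv_gt:
  assumes f: "f \<in> spirallike \<alpha> lam" and "cos \<alpha> > 0" "lam < 1" and w: "w \<in> ball 0 1"
  defines "G \<equiv> alexander_integrand f"
  shows "Re (exp (\<i> * of_real \<alpha>) * (1 + w * deriv G w / G w)) > lam * cos \<alpha>"
proof (cases "w = 0")
  case True
  then show ?thesis
    using assms(2,3) by (simp add: Re_exp)
next
  case False
  have "lam * cos \<alpha> < Re (exp (\<i> * of_real \<alpha>) * w * deriv f w / f w)"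
    using f w False unfolding spirallike_def by auto
  also have "exp (\<i> * of_real \<alpha>) * w * deriv f w / f w = exp (\<i> * of_real \<alpha>) * (w * deriv f w / f w)"
    by (simp only: mult.assoc times_divide_eq_right)
  also have "\<dots> = exp (\<i> * of_real \<alpha>) * (1 + w * deriv G w / G w)"
    by (simp only: G_def spirallike_alexander_integrand(3)[OF f w False])
  finally show ?thesis .
qed

lemma spirallike_logderiv_bound:
  assumes f: "f \<in> spirallike \<alpha> lam" and cos: "cos \<alpha> > 0" and lam: "lam < 1"
    and z: "z \<in> ball 0 1"
  defines "G \<equiv> alexander_integrand f"
  shows "cmod (deriv G z / G z) * (1 - cmod z) \<le> 2 * (1 - lam) * cos \<alpha>"
proof -
  define c where "c = (1 - lam) * cos \<alpha>"
  define Q where "Q w = exp (\<i> * of_real \<alpha>) * (1 + w * deriv G w / G w)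
      - of_real (lam * cos \<alpha>) - \<i> * of_real (sin \<alpha>)" for w
  have holG: "G holomorphic_on ball 0 1" and Gnz: "\<And>w. w \<in> ball 0 1 \<Longrightarrow> G w \<noteq> 0"
    using spirallike_alexander_integrand[OF f] unfolding G_def by auto
  have "Q holomorphic_on ball 0 1"
    unfolding Q_def[abs_def] using holG Gnz by (auto intro!: holomorphic_intros)
  moreover have "Re (Q w) > 0" if "w \<in> ball 0 1" for w
    using spirallike_Re_logderiv_gt[OF f cos lam that] by (simp add: Q_def G_def)
  moreover have "Q 0 = of_real c"
    by (simp add: Q_def c_def exp_Euler cos_of_real sin_of_real algebra_simps)
  ultimately have caratheodory: "cmod (Q w - of_real c) * (1 - cmod w) \<le> 2 * c * cmod w"
    if "w \<in> ball 0 1" for w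
    using caratheodory_norm_bound that by blast
  have Q_minus_c: "Q w - of_real c = exp (\<i> * of_real \<alpha>) * (w * (deriv G w / G w))" for w
    by (simp add: Q_def c_def exp_Euler cos_of_real sin_of_real algebra_simps)
  have bound: "cmod (deriv G w / G w) * (1 - cmod w) \<le> 2 * c"
    if "w \<in> ball 0 1" "w \<noteq> 0" for w
  proof -
    have "cmod w * (cmod (deriv G w / G w) * (1 - cmod w)) \<le> cmod w * (2 * c)"
      using caratheodory[OF that(1)] unfolding Q_minus_c norm_mult norm_exp_i_times
      by (simp add: algebra_simps)
    then show ?thesis
      using that(2) by simp
  qed
  have "cmod (deriv G z / G z) * (1 - cmod z) \<le> 2 * c"
  proof (cases "z = 0")
    case True
    have "(\<lambda>w. deriv G w / G w) holomorphic_on ball 0 1"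
      using holG Gnz by (auto intro!: holomorphic_intros)
    then have "continuous_on (ball 0 1) (\<lambda>w. cmod (deriv G w / G w) * (1 - cmod w))"
      by (intro continuous_intros holomorphic_on_imp_continuous_on)
    then have "isCont (\<lambda>w. cmod (deriv G w / G w) * (1 - cmod w)) 0"
      by (rule continuous_on_interior) simp
    then show ?thesis
      using True by (rule_tac isCont_le_at_center[OF _ zero_less_one]) (auto simp: bound)
  qed (use bound z in simp)
  then show ?thesis
    by (simp add: c_def algebra_simps)
qed

lemma preschwarzian_norm_alexander_le:
  assumes f: "f \<in> spirallike \<alpha> lam" and "cos \<alpha> > 0" "lam < 1"
  shows "preschwarzian_norm (alexander f) \<le> ereal (4 * (1 - lam) * cos \<alpha>)"
proof -
  define G where "G = alexander_integrand f"
  have "(1 - (cmod z)\<^sup>2) * cmod (deriv G z / G z) \<le> 4 * (1 - lam) * cos \<alpha>"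
    if z: "z \<in> ball 0 1" for z
  proof -
    have "(1 - (cmod z)\<^sup>2) * cmod (deriv G z / G z) = (1 + cmod z) * (cmod (deriv G z / G z) * (1 - cmod z))"
      by (simp add: power2_eq_square algebra_simps)
    also have "\<dots> \<le> (1 + cmod z) * (2 * (1 - lam) * cos \<alpha>)"
      using spirallike_logderiv_bound[OF assms z] by (intro mult_left_mono) (auto simp: G_def)
    also have "\<dots> \<le> 2 * (2 * (1 - lam) * cos \<alpha>)"
      using z assms(2,3) by (intro mult_right_mono) auto
    finally show ?thesis
      by (simp add: algebra_simps)
  qed
  moreover have "f holomorphic_on ball 0 1" "f 0 = 0"
    using f by (auto simp: spirallike_def classA_def)
  ultimately show ?thesis
    unfolding G_def by (subst preschwarzian_norm_alexander) (auto intro!: SUP_least)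
qed

text \<open>\<open>z / (1 - z)\<^bsup>2b\<^esup>\<close>; for \<open>b = 1\<close> this is the Koebe function.\<close>

definition spirallike_koebe :: "complex \<Rightarrow> complex \<Rightarrow> complex" where
  "spirallike_koebe b z = z * exp (- 2 * b * ln (1 - z))"

lemma has_field_derivative_koebe_factor:
  fixes b z :: complex
  assumes "z \<in> ball 0 1"
  shows "((\<lambda>z. exp (- 2 * b * ln (1 - z))) has_field_derivative
      exp (- 2 * b * ln (1 - z)) * (2 * b / (1 - z))) (at z)"
proof -
  have "Re (1 - z) > 0"
    using assms complex_Re_le_cmod[of z] by simp
  then have "1 - z \<notin> \<real>\<^sub>\<le>\<^sub>0" "1 - z \<noteq> 0"
    by (auto simp: complex_nonpos_Reals_iff)
  then show ?thesis
    by (auto intro!: derivative_eq_intros simp: field_simps)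
qed

lemma alexander_integrand_spirallike_koebe:
  fixes b w :: complex
  shows "alexander_integrand (spirallike_koebe b) w = exp (- 2 * b * ln (1 - w))"
proof -
  have "(spirallike_koebe b has_field_derivative 1) (at 0)"
    unfolding spirallike_koebe_def[abs_def]
    using has_field_derivative_koebe_factor[of 0 b] by (auto intro!: derivative_eq_intros)
  then show ?thesis
    by (auto simp: alexander_integrand_def spirallike_koebe_def DERIV_imp_deriv)
qed

lemma logderiv_alexander_integrand_spirallike_koebe:
  fixes b w :: complex
  assumes w: "w \<in> ball 0 1"
  defines "G \<equiv> alexander_integrand (spirallike_koebe b)"
  shows "deriv G w / G w = 2 * b / (1 - w)"
proof -
  have "(G has_field_derivative exp (- 2 * b * ln (1 - w)) * (2 * b / (1 - w))) (at w)"
    using has_field_derivative_koebe_factor[OF w] w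
    by (rule has_field_derivative_transform_within_open[OF _ open_ball])
       (simp add: G_def alexander_integrand_spirallike_koebe)
  then show ?thesis
    using w by (simp add: G_def alexander_integrand_spirallike_koebe DERIV_imp_deriv)
qed

lemma Re_one_plus_div_one_minus_pos:
  fixes z :: complex
  assumes "cmod z < 1"
  shows "Re ((1 + z) / (1 - z)) > 0"
proof -
  have "z \<noteq> 1"
    using assms by auto
  moreover have "(Re z)\<^sup>2 + (Im z)\<^sup>2 < 1"
    using assms by (simp add: cmod_power2[symmetric] power_less_one_iff abs_square_less_1)
  ultimately show ?thesis
    by (simp add: Re_divide' power2_eq_square algebra_simps)
qed

lemma holomorphic_spirallike_koebe: "spirallike_koebe b holomorphic_on ball 0 1"
proof -
  have "spirallike_koebe b field_differentiable at w" if "w \<in> ball 0 1" for w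
    unfolding spirallike_koebe_def[abs_def] field_differentiable_def
    by (rule exI, rule DERIV_mult[OF DERIV_ident has_field_derivative_koebe_factor[OF that]])
  then show ?thesis
    unfolding holomorphic_on_def using field_differentiable_at_within by blast
qed

lemma spirallike_koebe_mem_spirallike:
  assumes "cos \<alpha> > 0" and "lam < 1"
  shows "spirallike_koebe (exp (- (\<i> * of_real \<alpha>)) * of_real ((1 - lam) * cos \<alpha>)) \<in> spirallike \<alpha> lam"
proof -
  define c where "c = (1 - lam) * cos \<alpha>"
  define b where "b = exp (- (\<i> * of_real \<alpha>)) * of_real c"
  define f where "f = spirallike_koebe b"
  have c: "c > 0"
    using assms by (simp add: c_def)
  have b: "exp (\<i> * of_real \<alpha>) * b = of_real c"
    by (simp add: b_def exp_minus)
  have holf: "f holomorphic_on ball 0 1" and f0: "f 0 = 0"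
    by (simp_all add: f_def holomorphic_spirallike_koebe spirallike_koebe_def)
  have "deriv f 0 = 1"
    using alexander_integrand_spirallike_koebe[of b 0] by (simp add: f_def alexander_integrand_def)
  moreover have fnz: "f w \<noteq> 0" if "w \<noteq> 0" for w
    using that by (simp add: f_def spirallike_koebe_def)
  moreover have "Re (exp (\<i> * of_real \<alpha>) * w * deriv f w / f w) > lam * cos \<alpha>"
    if w: "w \<in> ball 0 1" "w \<noteq> 0" for w
  proof -
    have "1 - w \<noteq> 0"
      using w by auto
    have "w * deriv f w / f w = 1 + w * (deriv (alexander_integrand f) w / alexander_integrand f w)"
      using logderiv_alexander_integrand[OF holf open_ball f0 w(1) fnz[OF w(2)]] by simp
    also have "\<dots> = 1 + w * (2 * b / (1 - w))"
      using logderiv_alexander_integrand_spirallike_koebe[OF w(1), of b] by (simp only: f_def)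
    finally have logderiv: "w * deriv f w / f w = 1 + w * (2 * b / (1 - w))" .
    have "exp (\<i> * of_real \<alpha>) * w * deriv f w / f w = exp (\<i> * of_real \<alpha>) * (w * deriv f w / f w)"
      by (simp only: mult.assoc times_divide_eq_right)
    also have "\<dots> = exp (\<i> * of_real \<alpha>) * (1 + w * (2 * b / (1 - w)))"
      by (simp only: logderiv)
    also have "\<dots> = exp (\<i> * of_real \<alpha>) + (exp (\<i> * of_real \<alpha>) * b) * (2 * w / (1 - w))"
      by (simp add: algebra_simps)
    also have "\<dots> = exp (\<i> * of_real \<alpha>) + of_real c * ((1 + w) / (1 - w) - 1)"
      unfolding b using \<open>1 - w \<noteq> 0\<close> by (simp add: field_simps)
    finally have "Re (exp (\<i> * of_real \<alpha>) * w * deriv f w / f w) = cos \<alpha> - c + c * Re ((1 + w) / (1 - w))"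
      by (simp only:) (simp add: Re_exp right_diff_distrib del: times_divide_eq_right)
    moreover have "c * Re ((1 + w) / (1 - w)) > 0"
      using c Re_one_plus_div_one_minus_pos w by simp
    ultimately show ?thesis
      by (simp add: c_def algebra_simps)
  qed
  ultimately show ?thesis
    using holf f0 by (simp add: spirallike_def classA_def f_def b_def c_def)
qed

lemma preschwarzian_norm_alexander_spirallike_koebe:
  "preschwarzian_norm (alexander (spirallike_koebe b)) = ereal (4 * cmod b)"
proof -
  define G where "G = alexander_integrand (spirallike_koebe b)"
  define F where "F z = (1 - (cmod z)\<^sup>2) * cmod (deriv G z / G z)" for z
  have F_eq: "F z = 2 * cmod b * ((1 - (cmod z)\<^sup>2) / cmod (1 - z))" if "z \<in> ball 0 1" for z
    using logderiv_alexander_integrand_spirallike_koebe[OF that, of b]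
    by (simp add: F_def G_def norm_divide norm_mult)
  have "F z \<le> 4 * cmod b" if z: "z \<in> ball 0 1" for z
  proof -
    have "1 - cmod z \<le> cmod (1 - z)"
      using norm_triangle_ineq2[of 1 z] by simp
    moreover have "1 - cmod z > 0"
      using z by simp
    ultimately have "(1 - (cmod z)\<^sup>2) / cmod (1 - z) \<le> (1 - (cmod z)\<^sup>2) / (1 - cmod z)"
      using z by (intro divide_left_mono mult_pos_pos) (auto simp: abs_square_le_1 power_le_one)
    also have "\<dots> = 1 + cmod z"
      using \<open>1 - cmod z > 0\<close> by (simp add: power2_eq_square field_simps)
    also have "\<dots> \<le> 2"
      using z by simp
    finally have "2 * cmod b * ((1 - (cmod z)\<^sup>2) / cmod (1 - z)) \<le> 2 * cmod b * 2"
      by (rule mult_left_mono) simp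
    then show ?thesis
      unfolding F_eq[OF z] by simp
  qed
  then have le: "(SUP z \<in> ball 0 1. ereal (F z)) \<le> ereal (4 * cmod b)"
    by (auto intro!: SUP_least)
  have F_real: "F (of_real r) = 2 * cmod b * (1 + r)" if "0 \<le> r" "r < 1" for r
  proof -
    have "cmod (1 - complex_of_real r) = 1 - r"
      using that by (metis abs_of_pos diff_gt_0_iff_gt norm_of_real of_real_1 of_real_diff)
    then have "F (of_real r) = 2 * cmod b * ((1 - r\<^sup>2) / (1 - r))"
      using F_eq[of "of_real r"] that by simp
    also have "\<dots> = 2 * cmod b * (1 + r)"
      using that by (simp add: power2_eq_square field_simps)
    finally show ?thesis .
  qed
  have "ereal (4 * cmod b) \<le> (SUP z \<in> ball 0 1. ereal (F z))"
  proof (rule tendsto_upperbound)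
    show "((\<lambda>r. ereal (2 * cmod b * (1 + r))) \<longlongrightarrow> ereal (4 * cmod b)) (at_left 1)"
      by (auto intro!: tendsto_eq_intros)
    have "\<forall>\<^sub>F r in at_left 1. r \<in> {0<..<1::real}"
      by (rule eventually_at_left_real) simp
    then show "\<forall>\<^sub>F r in at_left 1. ereal (2 * cmod b * (1 + r)) \<le> (SUP z \<in> ball 0 1. ereal (F z))"
      by eventually_elim (auto simp flip: F_real intro!: SUP_upper)
  qed simp
  with le show ?thesis
    unfolding G_def F_def
    using preschwarzian_norm_alexander[OF holomorphic_spirallike_koebe] by (simp add: spirallike_koebe_def)
qed

theorem theorem3p2:
  fixes \<alpha> lam :: real
  assumes "- (pi / 2) < \<alpha>" and "\<alpha> < pi / 2" and "lam < 1"
  shows "(\<forall>f \<in> spirallike \<alpha> lam.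
            preschwarzian_norm (alexander f) \<le> ereal (4 * (1 - lam) * cos \<alpha>)) \<and>
         (\<exists>f \<in> spirallike \<alpha> lam.
            preschwarzian_norm (alexander f) = ereal (4 * (1 - lam) * cos \<alpha>))"
proof -
  have cos: "cos \<alpha> > 0"
    using assms(1,2) by (rule cos_gt_zero_pi)
  define b where "b = exp (- (\<i> * of_real \<alpha>)) * of_real ((1 - lam) * cos \<alpha>)"
  have "cmod b = (1 - lam) * cos \<alpha>"
    unfolding b_def norm_mult norm_of_real norm_exp_eq_Re using cos assms(3) by simp
  then have "preschwarzian_norm (alexander (spirallike_koebe b)) = ereal (4 * (1 - lam) * cos \<alpha>)"
    by (simp add: preschwarzian_norm_alexander_spirallike_koebe)
  moreover have "spirallike_koebe b \<in> spirallike \<alpha> lam"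
    unfolding b_def using cos assms(3) by (rule spirallike_koebe_mem_spirallike)
  ultimately show ?thesis
    using preschwarzian_norm_alexander_le[OF _ cos assms(3)] by blast
qed

end
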